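(* Let $K$ be a simplicial complex, $X\cup Y=K_0$ a cover of its vertex set, $A:=X\cap Y$, $P:=\{\sigma\in K\mid\sigma\subset X\text{ or }\sigma\subset Y\text{ or }\sigma\cap A\neq\emptyset\}$, and $g\colon P\hookrightarrow K$ the poset inclusion. For a simplex $\sigma$ of $K$, let $\sigma\!\uparrow\! g$ be the poset of simplices $\tau\in P$ with $\sigma\subset\tau$ (ordered by inclusion), let $\psi_\sigma\colon\mathrm{St}(\sigma,A)\to\sigma\!\uparrow\! g$ be $\mu\mapsto\mu\cup\sigma$, and let $\phi_\sigma\colon\sigma\!\uparrow\! g\to\mathrm{St}(\sigma)$ be $\tau\mapsto\tau$. Then: (1) if $\sigma\in P$, then $\sigma\!\uparrow\! g$ is contractible and $\phi_\sigma$ is a weak equivalence; (2) if $\sigma\in K\setminus P$, then $\psi_\sigma$ is a weak equivalence.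
   Context: A simplicial complex is a collection of finite nonempty subsets of a fixed set closed under taking nonempty subsets; $K_0$ is its vertex set and its simplices form a poset under inclusion. $\mathrm{St}(\sigma):=\{\mu\in K\mid\sigma\cup\mu\in K\}$ and $\mathrm{St}(\sigma,A):=\{\mu\subset A\mid 0<|\mu|<\infty,\ \mu\cup\sigma\in K\}$, both regarded as posets under inclusion. Homotopical notions for posets/functors refer to their nerves. *)

theory Defs
  imports "HOL-Analysis.Analysis"
begin

definition simplicial_complex :: "'v set set \<Rightarrow> bool" where
  "simplicial_complex K \<longleftrightarrow>
     (\<forall>\<sigma>\<in>K. finite \<sigma> \<and> \<sigma> \<noteq> {}) \<and>
     (\<forall>\<sigma>\<in>K. \<forall>\<tau>. \<tau> \<subseteq> \<sigma> \<and> \<tau> \<noteq> {} \<longrightarrow> \<tau> \<in> K)"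

definition vertex_set :: "'v set set \<Rightarrow> 'v set" where
  "vertex_set K = {v. {v} \<in> K}"

definition star :: "'v set set \<Rightarrow> 'v set \<Rightarrow> 'v set set" where
  "star K \<sigma> = {\<mu> \<in> K. \<sigma> \<union> \<mu> \<in> K}"

definition star_in :: "'v set set \<Rightarrow> 'v set \<Rightarrow> 'v set \<Rightarrow> 'v set set" where
  "star_in K \<sigma> A = {\<mu>. \<mu> \<subseteq> A \<and> finite \<mu> \<and> \<mu> \<noteq> {} \<and> \<mu> \<union> \<sigma> \<in> K}"

text \<open>The under-poset sigma up g for the inclusion g : P -> K: elements of P containing sigma.\<close>
definition up_poset :: "'v set set \<Rightarrow> 'v set \<Rightarrow> 'v set set" where
  "up_poset P \<sigma> = {\<tau> \<in> P. \<sigma> \<subseteq> \<tau>}"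

text \<open>Simplices of the nerve: finite nonempty chains.\<close>
definition chains :: "'a set set \<Rightarrow> 'a set set set" where
  "chains P = {c. c \<subseteq> P \<and> finite c \<and> c \<noteq> {} \<and> (\<forall>p\<in>c. \<forall>q\<in>c. p \<subseteq> q \<or> q \<subseteq> p)}"

definition supp :: "('p \<Rightarrow> real) \<Rightarrow> 'p set" where
  "supp \<alpha> = {p. \<alpha> p \<noteq> 0}"

text \<open>Points of the geometric realization: barycentric coordinate functions supported on a simplex.\<close>
definition geom :: "'a set set \<Rightarrow> ('a set \<Rightarrow> real) set" where
  "geom P = {\<alpha>. (\<forall>p. 0 \<le> \<alpha> p) \<and> supp \<alpha> \<in> chains P \<and> sum \<alpha> (supp \<alpha>) = 1}"

definition cell :: "'p set \<Rightarrow> ('p \<Rightarrow> real) set" where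
  "cell c = {\<alpha>. (\<forall>p. 0 \<le> \<alpha> p) \<and> (\<forall>p. p \<notin> c \<longrightarrow> \<alpha> p = 0) \<and> sum \<alpha> c = 1}"

text \<open>The realization carries the weak (coherent) topology w.r.t. its closed simplices,
  each of which carries the Euclidean topology.\<close>
definition geom_top :: "'a set set \<Rightarrow> ('a set \<Rightarrow> real) topology" where
  "geom_top P = topology (\<lambda>U. U \<subseteq> geom P \<and>
      (\<forall>c\<in>chains P. openin (subtopology (powertop_real UNIV) (cell c)) (U \<inter> cell c)))"

lemma istopology_geom_top: "istopology (\<lambda>U. U \<subseteq> geom P \<and>
      (\<forall>c\<in>chains P. openin (subtopology (powertop_real UNIV) (cell c)) (U \<inter> cell c)))"
  unfolding istopology_def
proof (rule conjI; intro allI impI)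
  fix S T :: "('a set \<Rightarrow> real) set"
  assume a1: "(S \<subseteq> geom P \<and> (\<forall>c\<in>chains P. openin (subtopology (powertop_real UNIV) (cell c)) (S \<inter> cell c)))"
   and a2: "(T \<subseteq> geom P \<and> (\<forall>c\<in>chains P. openin (subtopology (powertop_real UNIV) (cell c)) (T \<inter> cell c)))"
  note a = a1 a2
  show "S \<inter> T \<subseteq> geom P \<and> (\<forall>c\<in>chains P. openin (subtopology (powertop_real UNIV) (cell c)) (S \<inter> T \<inter> cell c))"
  proof (intro conjI ballI)
    show "S \<inter> T \<subseteq> geom P" using a by blast
    fix c assume "c \<in> chains P"
    hence "openin (subtopology (powertop_real UNIV) (cell c)) ((S \<inter> cell c) \<inter> (T \<inter> cell c))"
      using a by (meson openin_Int)
    thus "openin (subtopology (powertop_real UNIV) (cell c)) (S \<inter> T \<inter> cell c)"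
      by (simp add: Int_ac)
  qed
next
  fix \<K> :: "('a set \<Rightarrow> real) set set"
  assume a: "\<forall>K\<in>\<K>. K \<subseteq> geom P \<and> (\<forall>c\<in>chains P. openin (subtopology (powertop_real UNIV) (cell c)) (K \<inter> cell c))"
  show "\<Union>\<K> \<subseteq> geom P \<and> (\<forall>c\<in>chains P. openin (subtopology (powertop_real UNIV) (cell c)) (\<Union>\<K> \<inter> cell c))"
  proof (intro conjI ballI)
    show "\<Union>\<K> \<subseteq> geom P" using a by blast
    fix c assume "c \<in> chains P"
    hence "openin (subtopology (powertop_real UNIV) (cell c)) (\<Union>K\<in>\<K>. K \<inter> cell c)"
      using a by (intro openin_Union) blast
    thus "openin (subtopology (powertop_real UNIV) (cell c)) (\<Union>\<K> \<inter> cell c)"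
      proof -
      have "\<Union>\<K> \<inter> cell c = (\<Union>K\<in>\<K>. K \<inter> cell c)" by blast
      then show ?thesis using \<open>openin _ (\<Union>K\<in>\<K>. K \<inter> cell c)\<close> by simp
    qed
  qed
qed

text \<open>Map of realizations induced by an order-preserving map h of posets.\<close>
definition nerve_map :: "('p \<Rightarrow> 'q) \<Rightarrow> ('p \<Rightarrow> real) \<Rightarrow> ('q \<Rightarrow> real)" where
  "nerve_map h \<alpha> = (\<lambda>q. sum \<alpha> {p. \<alpha> p \<noteq> 0 \<and> h p = q})"

definition sphere_base :: "nat \<Rightarrow> real" where
  "sphere_base = (\<lambda>i. if i = 0 then 1 else 0)"

text \<open>f induces a bijection on pi_0 and on all pi_n(X,x), n >= 1, for all basepoints x;
  pi_n(X,x) is the set of based maps (S^n, base) -> (X, x) modulo based homotopy.\<close>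
definition weak_homotopy_equivalence ::
    "'a topology \<Rightarrow> 'b topology \<Rightarrow> ('a \<Rightarrow> 'b) \<Rightarrow> bool" where
  "weak_homotopy_equivalence X Y f \<longleftrightarrow>
     continuous_map X Y f \<and>
     (\<forall>y\<in>topspace Y. \<exists>x\<in>topspace X. path_component_of Y (f x) y) \<and>
     (\<forall>n. \<forall>x\<in>topspace X.
        (\<forall>g h. continuous_map (nsphere n) X g \<and> g sphere_base = x \<and>
               continuous_map (nsphere n) X h \<and> h sphere_base = x \<and>
               homotopic_with (\<lambda>k. k sphere_base = f x) (nsphere n) Y (f \<circ> g) (f \<circ> h)
               \<longrightarrow> homotopic_with (\<lambda>k. k sphere_base = x) (nsphere n) X g h) \<and>
        (\<forall>k. continuous_map (nsphere n) Y k \<and> k sphere_base = f x \<longrightarrow>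
             (\<exists>g. continuous_map (nsphere n) X g \<and> g sphere_base = x \<and>
                  homotopic_with (\<lambda>k. k sphere_base = f x) (nsphere n) Y (f \<circ> g) k)))"

end

theory Submission
  imports Defs
begin

text \<open>The basic tool is Quillen's
  homotopy: if \<open>f \<subseteq> g\<close> pointwise for monotone maps, the induced maps of realizations are
  homotopic, relative to the points on whose support \<open>f\<close> and \<open>g\<close> agree. A poset \<open>Q\<close> containing
  \<open>\<sigma>\<close> and closed under \<open>\<mu> \<mapsto> \<mu> \<union> \<sigma>\<close> is then a cone: its realization contracts onto any point
  whose support lies above \<open>\<sigma>\<close>, by a contraction fixing that point. For \<open>\<sigma> \<in> P\<close> both
  \<open>\<sigma>\<up>g\<close> and \<open>St(\<sigma>)\<close> are such cones, so \<open>\<phi>\<^sub>\<sigma>\<close> is a map between contractible spaces. For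
  \<open>\<sigma> \<notin> P\<close> every \<open>\<tau> \<supseteq> \<sigma>\<close> in \<open>P\<close> meets \<open>A\<close>, and \<open>\<tau> \<mapsto> \<tau> \<inter> A\<close> is a retraction of \<open>\<psi>\<^sub>\<sigma>\<close> with
  \<open>\<psi>\<^sub>\<sigma> (\<tau> \<inter> A) \<subseteq> \<tau>\<close>, so \<open>\<psi>\<^sub>\<sigma>\<close> is a homotopy equivalence.\<close>

section \<open>Topology of geometric realizations\<close>

lemma openin_geom_top:
  "openin (geom_top P) U \<longleftrightarrow> U \<subseteq> geom P \<and>
     (\<forall>c\<in>chains P. openin (subtopology (powertop_real UNIV) (cell c)) (U \<inter> cell c))"
  unfolding geom_top_def by (subst topology_inverse'[OF istopology_geom_top]) simp

lemma chainsD: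
  assumes "c \<in> chains P"
  shows "c \<subseteq> P" "finite c" "c \<noteq> {}" "\<And>p q. p \<in> c \<Longrightarrow> q \<in> c \<Longrightarrow> p \<subseteq> q \<or> q \<subseteq> p"
  using assms by (auto simp: chains_def)

lemma supp_in_chains: "\<alpha> \<in> geom P \<Longrightarrow> supp \<alpha> \<in> chains P"
  by (simp add: geom_def)

lemma supp_subset_geom: "\<alpha> \<in> geom P \<Longrightarrow> supp \<alpha> \<subseteq> P"
  using chainsD(1)[OF supp_in_chains] .

lemma finite_supp_geom: "\<alpha> \<in> geom P \<Longrightarrow> finite (supp \<alpha>)"
  by (auto simp: geom_def chains_def)

lemma geom_nonneg: "\<alpha> \<in> geom P \<Longrightarrow> 0 \<le> \<alpha> p"
  by (auto simp: geom_def)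

lemma geom_pos: "\<alpha> \<in> geom P \<Longrightarrow> p \<in> supp \<alpha> \<Longrightarrow> 0 < \<alpha> p"
  by (auto simp: geom_def supp_def order_less_le)

lemma cell_supp_subset: "\<alpha> \<in> cell c \<Longrightarrow> supp \<alpha> \<subseteq> c"
  by (auto simp: cell_def supp_def)

lemma sum_supp_eq_sum: "finite c \<Longrightarrow> supp \<alpha> \<subseteq> c \<Longrightarrow> sum \<alpha> (supp \<alpha>) = sum \<alpha> c"
  by (intro sum.mono_neutral_left) (auto simp: supp_def)

lemma cell_subset_geom:
  assumes "c \<in> chains P"
  shows "cell c \<subseteq> geom P"
proof
  fix \<alpha> assume \<alpha>: "\<alpha> \<in> cell c"
  have s: "supp \<alpha> \<subseteq> c" using cell_supp_subset[OF \<alpha>] .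
  have fc: "finite c" using chainsD[OF assms] by simp
  have sum1: "sum \<alpha> (supp \<alpha>) = 1" using sum_supp_eq_sum[OF fc s] \<alpha> by (simp add: cell_def)
  then have "supp \<alpha> \<noteq> {}" by auto
  then have "supp \<alpha> \<in> chains P"
    using s chainsD[OF assms] finite_subset[OF s fc] unfolding chains_def by blast
  then show "\<alpha> \<in> geom P" using \<alpha> sum1 by (simp add: geom_def cell_def)
qed

lemma geom_in_cellI: "\<alpha> \<in> geom P \<Longrightarrow> supp \<alpha> \<subseteq> c \<Longrightarrow> finite c \<Longrightarrow> \<alpha> \<in> cell c"
  using sum_supp_eq_sum[of c \<alpha>] by (auto simp: geom_def cell_def supp_def)

lemma geom_in_cell_supp: "\<alpha> \<in> geom P \<Longrightarrow> \<alpha> \<in> cell (supp \<alpha>)"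
  by (rule geom_in_cellI[OF _ order_refl finite_supp_geom])

lemma vertex_in_geom: "p \<in> P \<Longrightarrow> (\<lambda>q. if q = p then 1 else 0) \<in> geom P"
proof -
  assume "p \<in> P"
  moreover have "supp (\<lambda>q. if q = p then 1 else 0 :: real) = {p}" by (auto simp: supp_def)
  ultimately show ?thesis by (simp add: geom_def chains_def)
qed

lemma cell_convex:
  assumes "\<beta> \<in> cell c" "\<gamma> \<in> cell c" "0 \<le> t" "t \<le> 1"
  shows "(\<lambda>q. (1 - t) * \<beta> q + t * \<gamma> q) \<in> cell c"
proof -
  have "sum (\<lambda>q. (1 - t) * \<beta> q + t * \<gamma> q) c = (1 - t) * sum \<beta> c + t * sum \<gamma> c"
    by (simp add: sum.distrib sum_distrib_left)
  then show ?thesis using assms by (simp add: cell_def)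
qed

lemma topspace_geom_top [simp]: "topspace (geom_top P) = geom P"
proof -
  have "openin (geom_top P) (geom P)"
    unfolding openin_geom_top
  proof (intro conjI ballI order_refl)
    fix c assume "c \<in> chains P"
    then have "geom P \<inter> cell c = topspace (subtopology (powertop_real UNIV) (cell c))"
      using cell_subset_geom by fastforce
    then show "openin (subtopology (powertop_real UNIV) (cell c)) (geom P \<inter> cell c)"
      by (simp add: openin_subtopology_refl)
  qed
  then have "geom P \<subseteq> topspace (geom_top P)" by (simp add: openin_subset)
  moreover have "topspace (geom_top P) \<subseteq> geom P"
    using openin_topspace[of "geom_top P"] unfolding openin_geom_top by blast
  ultimately show ?thesis by blast
qed

lemma closedin_cell:
  assumes "finite c"
  shows "closedin (powertop_real UNIV) (cell c)"
proof -
  let ?S = "\<lambda>p. if p \<in> c then {0..} else {0::real}"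
  have "closedin (powertop_real UNIV) (PiE UNIV ?S)"
    by (simp add: closedin_product_topology)
  moreover have "closedin (powertop_real UNIV) {\<alpha> \<in> topspace (powertop_real UNIV). sum \<alpha> c \<in> {1}}"
    using assms
    by (intro closedin_continuous_map_preimage[where Y=euclideanreal] continuous_map_sum)
       (auto intro: continuous_map_product_projection)
  moreover have "cell c = PiE UNIV ?S \<inter> {\<alpha> \<in> topspace (powertop_real UNIV). sum \<alpha> c \<in> {1}}"
    by (auto simp: cell_def PiE_def Pi_def split: if_splits) (metis order_refl)
  ultimately show ?thesis by (simp add: closedin_Int)
qed

text \<open>Only finitely many cells are met, and the complement of an open set meets their union in a
  closed set.\<close>

lemma continuous_map_into_geom_top:
  assumes cont: "continuous_map Z (powertop_real UNIV) F"
    and in_geom: "\<And>z. z \<in> topspace Z \<Longrightarrow> F z \<in> geom Q"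
    and "finite D" and supp_D: "\<And>z. z \<in> topspace Z \<Longrightarrow> supp (F z) \<subseteq> D"
  shows "continuous_map Z (geom_top Q) F"
  unfolding continuous_map_def
proof (intro conjI allI impI)
  show "F \<in> topspace Z \<rightarrow> topspace (geom_top Q)" using in_geom by auto
  fix U assume U: "openin (geom_top Q) U"
  define C where "C = {cell d | d. d \<in> chains Q \<and> d \<subseteq> D}"
  have "finite C"
  proof -
    have "C \<subseteq> cell ` Pow D" by (auto simp: C_def)
    then show ?thesis using \<open>finite D\<close> by (meson finite_Pow_iff finite_imageI finite_subset)
  qed
  have F_in: "F z \<in> \<Union>C" if "z \<in> topspace Z" for z
    using geom_in_cell_supp[OF in_geom[OF that]] supp_in_chains[OF in_geom[OF that]] supp_D[OF that]
    unfolding C_def by blast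
  have "closedin (powertop_real UNIV) (K - U)" if "K \<in> C" for K
  proof -
    obtain d where d: "K = cell d" "d \<in> chains Q" using \<open>K \<in> C\<close> by (auto simp: C_def)
    have "openin (subtopology (powertop_real UNIV) (cell d)) (U \<inter> cell d)"
      using U d unfolding openin_geom_top by blast
    from closedin_diff[OF closedin_topspace this]
    have "closedin (subtopology (powertop_real UNIV) (cell d)) (cell d - (U \<inter> cell d))"
      by simp
    moreover have "cell d - (U \<inter> cell d) = cell d - U" by blast
    ultimately have "closedin (subtopology (powertop_real UNIV) (cell d)) (cell d - U)"
      by simp
    moreover have "closedin (powertop_real UNIV) (cell d)"
      using closedin_cell chainsD(2)[OF d(2)] by blast
    ultimately show ?thesis using closedin_trans_full d(1) by blast
  qed
  then have "closedin (powertop_real UNIV) (\<Union>((\<lambda>K. K - U) ` C))"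
    using \<open>finite C\<close> by (intro closedin_Union) auto
  moreover have "\<Union>((\<lambda>K. K - U) ` C) = \<Union>C - U" by blast
  ultimately have "closedin (powertop_real UNIV) (\<Union>C - U)" by simp
  then obtain V where V: "openin (powertop_real UNIV) V" "V = topspace (powertop_real UNIV) - (\<Union>C - U)"
    by (simp add: closedin_def)
  have "{z \<in> topspace Z. F z \<in> U} = {z \<in> topspace Z. F z \<in> V}"
    using F_in V(2) by auto
  then show "openin Z {z \<in> topspace Z. F z \<in> U}"
    using openin_continuous_map_preimage[OF cont V(1)] by simp
qed

lemma openin_geom_top_all_times:
  fixes H :: "real \<times> ('a set \<Rightarrow> real) \<Rightarrow> 'c"
  assumes cont_cells: "\<And>c. c \<in> chains Q \<Longrightarrow>
     continuous_map (prod_topology (top_of_set {0..1}) (subtopology (powertop_real UNIV) (cell c))) Z H"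
    and W: "openin Z W" and J: "compactin (top_of_set {0..1}) J"
  shows "openin (geom_top Q) {\<alpha> \<in> geom Q. \<forall>t\<in>J. H (t, \<alpha>) \<in> W}"
  unfolding openin_geom_top
proof (intro conjI ballI)
  let ?I = "top_of_set {0..1::real}"
  let ?C = "\<lambda>c. subtopology (powertop_real UNIV) (cell c)"
  let ?V = "{\<alpha> \<in> geom Q. \<forall>t\<in>J. H (t, \<alpha>) \<in> W}"
  show "?V \<subseteq> geom Q" by blast
  fix c assume c: "c \<in> chains Q"
  define Ob where "Ob = {x \<in> topspace (prod_topology ?I (?C c)). H x \<in> W}"
  have Ob_open: "openin (prod_topology ?I (?C c)) Ob"
    unfolding Ob_def using openin_continuous_map_preimage[OF cont_cells[OF c] W] .
  have J_sub: "J \<subseteq> {0..1}" using compactin_subset_topspace[OF J] by simp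
  show "openin (?C c) (?V \<inter> cell c)"
  proof (subst openin_subopen, intro ballI)
    fix \<alpha> assume \<alpha>: "\<alpha> \<in> ?V \<inter> cell c"
    have "J \<times> {\<alpha>} \<subseteq> Ob"
      using \<alpha> J_sub by (auto simp: Ob_def)
    then obtain U' V' where "openin (?C c) V'" "\<alpha> \<in> V'" "J \<subseteq> U'" "U' \<times> V' \<subseteq> Ob"
      using tube_lemma_left[OF Ob_open J, of \<alpha>] \<alpha> by auto
    then have UV: "openin (?C c) V'" "\<alpha> \<in> V'" "J \<times> V' \<subseteq> Ob" by blast+
    have "V' \<subseteq> ?V \<inter> cell c"
      using UV(3) openin_subset[OF UV(1)] cell_subset_geom[OF c] by (auto simp: Ob_def)
    then show "\<exists>T. openin (?C c) T \<and> \<alpha> \<in> T \<and> T \<subseteq> ?V \<inter> cell c" using UV by blast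
  qed
qed

lemma interval_compact_neighbourhood:
  assumes S: "openin (top_of_set {0..1::real}) S" and "t0 \<in> S"
  obtains T J where "openin (top_of_set {0..1}) T" "t0 \<in> T" "T \<subseteq> J" "J \<subseteq> S"
    "compactin (top_of_set {0..1}) J"
proof -
  obtain e where e: "e > 0" "\<And>t. t \<in> {0..1} \<Longrightarrow> dist t t0 < e \<Longrightarrow> t \<in> S"
    using S \<open>t0 \<in> S\<close> unfolding openin_euclidean_subtopology_iff by blast
  have "t0 \<in> {0..1}" using openin_subset[OF S] \<open>t0 \<in> S\<close> by auto
  define J where "J = {max 0 (t0 - e/2) .. min 1 (t0 + e/2)}"
  define T where "T = {0..1} \<inter> ball t0 (e/2)"
  have "openin (top_of_set {0..1}) T" by (simp add: T_def openin_open_Int)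
  moreover have "t0 \<in> T" using \<open>t0 \<in> {0..1}\<close> e(1) by (simp add: T_def)
  moreover have "T \<subseteq> J"
  proof
    fix t assume "t \<in> T"
    then have "0 \<le> t" "t \<le> 1" "\<bar>t0 - t\<bar> < e/2"
      by (auto simp: T_def dist_real_def simp del: less_divide_eq_numeral1)
    then show "t \<in> J" using abs_less_iff[of "t0 - t" "e/2"] by (auto simp: J_def)
  qed
  moreover have "J \<subseteq> S" using e by (auto simp: J_def dist_real_def)
  moreover have "compactin (top_of_set {0..1}) J" by (simp add: compactin_subtopology J_def)
  ultimately show ?thesis using that by blast
qed

text \<open>The product of the coherent topology with the compact interval is again coherent with the
  products of cells; the tube lemma is where compactness enters.\<close>

lemma continuous_map_interval_times_geom_top:
  fixes H :: "real \<times> ('a set \<Rightarrow> real) \<Rightarrow> 'c"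
  assumes cont_cells: "\<And>c. c \<in> chains Q \<Longrightarrow>
     continuous_map (prod_topology (top_of_set {0..1}) (subtopology (powertop_real UNIV) (cell c))) Z H"
  shows "continuous_map (prod_topology (top_of_set {0..1}) (geom_top Q)) Z H"
  unfolding continuous_map_def
proof (intro conjI allI impI)
  let ?I = "top_of_set {0..1::real}"
  let ?C = "\<lambda>c. subtopology (powertop_real UNIV) (cell c)"
  have in_cells: "(t, \<alpha>) \<in> topspace (prod_topology ?I (?C (supp \<alpha>)))" "supp \<alpha> \<in> chains Q"
    if "t \<in> {0..1}" "\<alpha> \<in> geom Q" for t \<alpha>
    using that geom_in_cell_supp supp_in_chains by auto
  show "H \<in> topspace (prod_topology ?I (geom_top Q)) \<rightarrow> topspace Z"
    using continuous_map_funspace[OF cont_cells] in_cells by fastforce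
  fix W assume W: "openin Z W"
  define Ob where "Ob = {x \<in> topspace (prod_topology ?I (geom_top Q)). H x \<in> W}"
  show "openin (prod_topology ?I (geom_top Q)) {x \<in> topspace (prod_topology ?I (geom_top Q)). H x \<in> W}"
    unfolding Ob_def[symmetric]
  proof (subst openin_subopen, intro ballI)
    fix x assume "x \<in> Ob"
    then obtain t0 \<alpha>0 where x: "x = (t0, \<alpha>0)" "t0 \<in> {0..1}" "\<alpha>0 \<in> geom Q" "H (t0, \<alpha>0) \<in> W"
      by (auto simp: Ob_def)
    have "continuous_map ?I (prod_topology ?I (?C (supp \<alpha>0))) (\<lambda>t. (t, \<alpha>0))"
      using geom_in_cell_supp[OF x(3)] by (auto simp: continuous_map_pairwise o_def)
    then have "continuous_map ?I Z (H \<circ> (\<lambda>t. (t, \<alpha>0)))"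
      using continuous_map_compose cont_cells[OF supp_in_chains[OF x(3)]] by blast
    from openin_continuous_map_preimage[OF this W]
    have "openin ?I {t \<in> {0..1}. H (t, \<alpha>0) \<in> W}" by simp
    then obtain T J where TJ: "openin ?I T" "t0 \<in> T" "T \<subseteq> J" "J \<subseteq> {t \<in> {0..1}. H (t, \<alpha>0) \<in> W}"
        "compactin ?I J"
      using interval_compact_neighbourhood x(2,4) by (metis (no_types, lifting) mem_Collect_eq)
    define V where "V = {\<alpha> \<in> geom Q. \<forall>t\<in>J. H (t, \<alpha>) \<in> W}"
    have "openin (geom_top Q) V"
      unfolding V_def by (rule openin_geom_top_all_times[OF cont_cells W TJ(5)])
    then have "openin (prod_topology ?I (geom_top Q)) (T \<times> V)"
      using TJ(1) by (simp add: openin_prod_Times_iff)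
    moreover have "x \<in> T \<times> V" using x TJ(2,4) by (auto simp: V_def)
    moreover have "T \<times> V \<subseteq> Ob"
      using TJ(3) openin_subset[OF TJ(1)] by (auto simp: Ob_def V_def)
    ultimately show "\<exists>T. openin (prod_topology ?I (geom_top Q)) T \<and> x \<in> T \<and> T \<subseteq> Ob" by blast
  qed
qed

lemma nerve_map_eq_sum_supp: "nerve_map h \<alpha> q = sum \<alpha> {p \<in> supp \<alpha>. h p = q}"
  by (simp add: nerve_map_def supp_def)

lemma nerve_map_eq_self:
  assumes "\<And>p. p \<in> supp \<alpha> \<Longrightarrow> h p = p"
  shows "nerve_map h \<alpha> = \<alpha>"
proof
  fix q
  have "{p \<in> supp \<alpha>. h p = q} = (if \<alpha> q \<noteq> 0 then {q} else {})"
    using assms by (auto simp: supp_def)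
  then show "nerve_map h \<alpha> q = \<alpha> q" by (simp add: nerve_map_eq_sum_supp)
qed

lemma nerve_map_ident [simp]: "nerve_map (\<lambda>p. p) = id"
  by (rule ext) (simp add: nerve_map_eq_self)

lemma nerve_map_cell_eq:
  assumes "\<alpha> \<in> cell c" "finite c"
  shows "nerve_map h \<alpha> q = sum \<alpha> {p \<in> c. h p = q}"
  unfolding nerve_map_eq_sum_supp using assms cell_supp_subset[OF assms(1)]
  by (intro sum.mono_neutral_left) (auto simp: supp_def)

lemma supp_nerve_map:
  assumes "\<alpha> \<in> geom P"
  shows "supp (nerve_map h \<alpha>) = h ` supp \<alpha>"
proof (rule set_eqI, rule iffI)
  fix q assume "q \<in> supp (nerve_map h \<alpha>)"
  then have "nerve_map h \<alpha> q \<noteq> 0" by (simp add: supp_def)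
  then have "{p \<in> supp \<alpha>. h p = q} \<noteq> {}"
    unfolding nerve_map_eq_sum_supp by (metis (no_types) sum.empty)
  then show "q \<in> h ` supp \<alpha>" by auto
next
  fix q assume "q \<in> h ` supp \<alpha>"
  then have "0 < sum \<alpha> {p \<in> supp \<alpha>. h p = q}"
    using finite_supp_geom[OF assms] geom_pos[OF assms] by (intro sum_pos) auto
  then show "q \<in> supp (nerve_map h \<alpha>)" by (simp add: supp_def nerve_map_eq_sum_supp)
qed

lemma sum_nerve_map:
  assumes "\<alpha> \<in> geom P"
  shows "sum (nerve_map h \<alpha>) (h ` supp \<alpha>) = 1"
proof -
  have "sum (nerve_map h \<alpha>) (h ` supp \<alpha>) = (\<Sum>q\<in>h ` supp \<alpha>. sum \<alpha> {p \<in> supp \<alpha>. h p = q})"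
    by (simp add: nerve_map_eq_sum_supp)
  also have "\<dots> = sum \<alpha> (supp \<alpha>)"
    using finite_supp_geom[OF assms] by (intro sum.group) auto
  finally show ?thesis using assms by (simp add: geom_def)
qed

lemma image_chain_in_chains:
  assumes c: "c \<in> chains P" and maps_to: "\<And>p. p \<in> P \<Longrightarrow> h p \<in> Q"
    and mono: "\<And>p q. p \<in> P \<Longrightarrow> q \<in> P \<Longrightarrow> p \<subseteq> q \<Longrightarrow> h p \<subseteq> h q"
  shows "h ` c \<in> chains Q"
proof -
  have "x \<subseteq> y \<or> y \<subseteq> x" if x: "x \<in> h ` c" and y: "y \<in> h ` c" for x y
  proof -
    obtain p q where pq: "p \<in> c" "q \<in> c" "x = h p" "y = h q" using x y by blast
    then have "p \<in> P" "q \<in> P" "p \<subseteq> q \<or> q \<subseteq> p" using chainsD(1,4)[OF c] by auto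
    then show ?thesis using mono[of p q] mono[of q p] pq(3,4) by auto
  qed
  moreover have "h ` c \<subseteq> Q" using chainsD(1)[OF c] maps_to by auto
  ultimately show ?thesis using chainsD(2,3)[OF c] unfolding chains_def by auto
qed

lemma nerve_map_in_geom:
  assumes \<alpha>: "\<alpha> \<in> geom P" and maps_to: "\<And>p. p \<in> P \<Longrightarrow> h p \<in> Q"
    and mono: "\<And>p q. p \<in> P \<Longrightarrow> q \<in> P \<Longrightarrow> p \<subseteq> q \<Longrightarrow> h p \<subseteq> h q"
  shows "nerve_map h \<alpha> \<in> geom Q"
proof -
  have "\<forall>q. 0 \<le> nerve_map h \<alpha> q"
    using geom_nonneg[OF \<alpha>] by (auto simp: nerve_map_eq_sum_supp intro: sum_nonneg)
  then show ?thesis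
    unfolding geom_def mem_Collect_eq supp_nerve_map[OF \<alpha>]
    using image_chain_in_chains[where h=h, OF supp_in_chains[OF \<alpha>] maps_to mono]
      sum_nerve_map[OF \<alpha>] by blast
qed

lemma nerve_map_compose:
  assumes \<alpha>: "\<alpha> \<in> geom P"
  shows "nerve_map g (nerve_map f \<alpha>) = nerve_map (g \<circ> f) \<alpha>"
proof
  fix r
  have "nerve_map g (nerve_map f \<alpha>) r
      = (\<Sum>q\<in>{q \<in> f ` supp \<alpha>. g q = r}. sum \<alpha> {p \<in> supp \<alpha>. f p = q})"
    by (simp add: nerve_map_eq_sum_supp[of g] supp_nerve_map[OF \<alpha>] nerve_map_eq_sum_supp[of f])
  also have "\<dots> = (\<Sum>q\<in>{q \<in> f ` supp \<alpha>. g q = r}. sum \<alpha> {p \<in> {p \<in> supp \<alpha>. g (f p) = r}. f p = q})"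
    by (intro sum.cong refl arg_cong[where f="sum \<alpha>"]) auto
  also have "\<dots> = sum \<alpha> {p \<in> supp \<alpha>. g (f p) = r}"
    using finite_supp_geom[OF \<alpha>] by (intro sum.group) auto
  finally show "nerve_map g (nerve_map f \<alpha>) r = nerve_map (g \<circ> f) \<alpha> r"
    by (simp add: nerve_map_eq_sum_supp)
qed

section \<open>Quillen's homotopy for comparable poset maps\<close>

text \<open>On a chain \<open>S = {p\<^sub>1 \<subset> \<dots> \<subset> p\<^sub>k}\<close> the weights \<open>\<alpha> p\<^sub>i\<close> tile \<open>[0, 1]\<close> by the
  intervals \<open>[weight_upto S \<alpha> p\<^sub>i - \<alpha> p\<^sub>i, weight_upto S \<alpha> p\<^sub>i]\<close>. At time \<open>\<theta>\<close> the part of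
  the interval of \<open>p\<^sub>i\<close> below \<open>\<theta>\<close> is moved to \<open>f p\<^sub>i\<close> and the part above \<open>\<theta>\<close> to
  \<open>g p\<^sub>i\<close>. If \<open>f \<subseteq> g\<close>, the new support lies in the chain
  \<open>f p\<^sub>1 \<subseteq> \<dots> \<subseteq> f p\<^sub>j \<subseteq> g p\<^sub>j \<subseteq> \<dots> \<subseteq> g p\<^sub>k\<close>.\<close>

definition weight_upto :: "'p set set \<Rightarrow> ('p set \<Rightarrow> real) \<Rightarrow> 'p set \<Rightarrow> real" where
  "weight_upto S \<alpha> p = sum \<alpha> {q \<in> S. q \<subseteq> p}"

definition lower_share :: "'p set set \<Rightarrow> ('p set \<Rightarrow> real) \<Rightarrow> real \<Rightarrow> 'p set \<Rightarrow> real" where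
  "lower_share S \<alpha> \<theta> p = min (weight_upto S \<alpha> p) \<theta> - min (weight_upto S \<alpha> p - \<alpha> p) \<theta>"

definition upper_share :: "'p set set \<Rightarrow> ('p set \<Rightarrow> real) \<Rightarrow> real \<Rightarrow> 'p set \<Rightarrow> real" where
  "upper_share S \<alpha> \<theta> p = max (weight_upto S \<alpha> p) \<theta> - max (weight_upto S \<alpha> p - \<alpha> p) \<theta>"

definition interpolate ::
    "'p set set \<Rightarrow> ('p set \<Rightarrow> 'q set) \<Rightarrow> ('p set \<Rightarrow> 'q set) \<Rightarrow> real \<Rightarrow> ('p set \<Rightarrow> real) \<Rightarrow> 'q set \<Rightarrow> real"
  where "interpolate S f g \<theta> \<alpha> r =
    sum (lower_share S \<alpha> \<theta>) {p \<in> S. f p = r} + sum (upper_share S \<alpha> \<theta>) {p \<in> S. g p = r}"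

definition nerve_homotopy ::
    "('p set \<Rightarrow> 'q set) \<Rightarrow> ('p set \<Rightarrow> 'q set) \<Rightarrow> real \<times> ('p set \<Rightarrow> real) \<Rightarrow> 'q set \<Rightarrow> real"
  where "nerve_homotopy f g x = interpolate (supp (snd x)) f g (fst x) (snd x)"

lemma lower_share_add_upper_share: "lower_share S \<alpha> \<theta> p + upper_share S \<alpha> \<theta> p = \<alpha> p"
  unfolding lower_share_def upper_share_def by linarith

lemma lower_share_nonneg: "0 \<le> \<alpha> p \<Longrightarrow> 0 \<le> lower_share S \<alpha> \<theta> p"
  unfolding lower_share_def by linarith

lemma upper_share_nonneg: "0 \<le> \<alpha> p \<Longrightarrow> 0 \<le> upper_share S \<alpha> \<theta> p"
  unfolding upper_share_def by linarith

lemma lower_share_posD: "0 < lower_share S \<alpha> \<theta> p \<Longrightarrow> weight_upto S \<alpha> p - \<alpha> p < \<theta>"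
  unfolding lower_share_def by linarith

lemma upper_share_posD: "0 < upper_share S \<alpha> \<theta> p \<Longrightarrow> \<theta> < weight_upto S \<alpha> p"
  unfolding upper_share_def by linarith

lemma weight_upto_le_diff:
  assumes "finite S" and nonneg: "\<And>q. 0 \<le> \<alpha> q" and "p1 \<in> S" "p2 \<subseteq> p1" "p2 \<noteq> p1"
  shows "weight_upto S \<alpha> p2 \<le> weight_upto S \<alpha> p1 - \<alpha> p1"
proof -
  have "weight_upto S \<alpha> p1 - \<alpha> p1 = sum \<alpha> ({q \<in> S. q \<subseteq> p1} - {p1})"
    unfolding weight_upto_def using assms by (subst sum_diff1) auto
  moreover have "sum \<alpha> {q \<in> S. q \<subseteq> p2} \<le> sum \<alpha> ({q \<in> S. q \<subseteq> p1} - {p1})"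
    using assms by (intro sum_mono2) auto
  ultimately show ?thesis by (simp add: weight_upto_def)
qed

lemma weight_upto_bounds:
  assumes \<alpha>: "\<alpha> \<in> geom Q" and p: "p \<in> supp \<alpha>"
  shows "0 \<le> weight_upto (supp \<alpha>) \<alpha> p - \<alpha> p" "weight_upto (supp \<alpha>) \<alpha> p \<le> 1"
proof -
  have fin: "finite (supp \<alpha>)" using finite_supp_geom[OF \<alpha>] .
  have "weight_upto (supp \<alpha>) \<alpha> p - \<alpha> p = sum \<alpha> ({q \<in> supp \<alpha>. q \<subseteq> p} - {p})"
    unfolding weight_upto_def using fin p by (subst sum_diff1) auto
  also have "\<dots> \<ge> 0" using geom_nonneg[OF \<alpha>] by (intro sum_nonneg) auto
  finally show "0 \<le> weight_upto (supp \<alpha>) \<alpha> p - \<alpha> p" .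
  have "weight_upto (supp \<alpha>) \<alpha> p \<le> sum \<alpha> (supp \<alpha>)"
    unfolding weight_upto_def using fin geom_nonneg[OF \<alpha>] by (intro sum_mono2) auto
  then show "weight_upto (supp \<alpha>) \<alpha> p \<le> 1" using \<alpha> by (simp add: geom_def)
qed

lemma subset_if_lower_upper_share_nonzero:
  assumes chain: "S \<in> chains Q" and nonneg: "\<And>q. 0 \<le> \<alpha> q" and p: "p1 \<in> S" "p2 \<in> S"
    and shares: "lower_share S \<alpha> \<theta> p1 \<noteq> 0" "upper_share S \<alpha> \<theta> p2 \<noteq> 0"
  shows "p1 \<subseteq> p2"
proof (rule ccontr)
  assume "\<not> p1 \<subseteq> p2"
  then have "p2 \<subseteq> p1" "p2 \<noteq> p1" using chainsD(4)[OF chain p] by auto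
  then have "weight_upto S \<alpha> p2 \<le> weight_upto S \<alpha> p1 - \<alpha> p1"
    using weight_upto_le_diff chainsD(2)[OF chain] nonneg p(1) by blast
  moreover have "weight_upto S \<alpha> p1 - \<alpha> p1 < \<theta>"
    using shares(1) lower_share_nonneg[of \<alpha> p1 S \<theta>] nonneg lower_share_posD by force
  moreover have "\<theta> < weight_upto S \<alpha> p2"
    using shares(2) upper_share_nonneg[of \<alpha> p2 S \<theta>] nonneg upper_share_posD by force
  ultimately show False by linarith
qed

lemma interpolate_eq_supp:
  assumes "finite S" and "supp \<alpha> \<subseteq> S"
  shows "interpolate S f g \<theta> \<alpha> = interpolate (supp \<alpha>) f g \<theta> \<alpha>"
proof
  fix r
  have "weight_upto S \<alpha> = weight_upto (supp \<alpha>) \<alpha>"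
    unfolding weight_upto_def using assms by (intro ext sum.mono_neutral_right) (auto simp: supp_def)
  then have shares: "lower_share S \<alpha> \<theta> = lower_share (supp \<alpha>) \<alpha> \<theta>"
      "upper_share S \<alpha> \<theta> = upper_share (supp \<alpha>) \<alpha> \<theta>"
    by (simp_all add: fun_eq_iff lower_share_def upper_share_def)
  have "lower_share (supp \<alpha>) \<alpha> \<theta> p = 0" "upper_share (supp \<alpha>) \<alpha> \<theta> p = 0" if "p \<notin> supp \<alpha>" for p
    using that by (simp_all add: supp_def lower_share_def upper_share_def)
  then show "interpolate S f g \<theta> \<alpha> r = interpolate (supp \<alpha>) f g \<theta> \<alpha> r"
    unfolding interpolate_def shares using assms
    by (intro arg_cong2[where f="(+)"] sum.mono_neutral_right) auto
qed

lemma interpolate_nonneg: "(\<And>p. 0 \<le> \<alpha> p) \<Longrightarrow> 0 \<le> interpolate S f g \<theta> \<alpha> r"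
  unfolding interpolate_def by (intro add_nonneg_nonneg sum_nonneg lower_share_nonneg upper_share_nonneg)

lemma interpolate_nonzero:
  assumes "interpolate S f g \<theta> \<alpha> r \<noteq> 0"
  shows "\<exists>p\<in>S. (f p = r \<and> lower_share S \<alpha> \<theta> p \<noteq> 0) \<or> (g p = r \<and> upper_share S \<alpha> \<theta> p \<noteq> 0)"
proof (rule ccontr)
  assume "\<not> ?thesis"
  then have "sum (lower_share S \<alpha> \<theta>) {p \<in> S. f p = r} = 0" "sum (upper_share S \<alpha> \<theta>) {p \<in> S. g p = r} = 0"
    by (auto intro: sum.neutral)
  then show False using assms by (simp add: interpolate_def)
qed

lemma supp_interpolate: "supp (interpolate S f g \<theta> \<alpha>) \<subseteq> f ` S \<union> g ` S"
proof
  fix r assume "r \<in> supp (interpolate S f g \<theta> \<alpha>)"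
  then have "interpolate S f g \<theta> \<alpha> r \<noteq> 0" by (simp add: supp_def)
  then show "r \<in> f ` S \<union> g ` S" using interpolate_nonzero by blast
qed

lemma sum_interpolate:
  assumes "finite S"
  shows "sum (interpolate S f g \<theta> \<alpha>) (f ` S \<union> g ` S) = sum \<alpha> S"
proof -
  have "sum (interpolate S f g \<theta> \<alpha>) (f ` S \<union> g ` S)
      = sum (lower_share S \<alpha> \<theta>) S + sum (upper_share S \<alpha> \<theta>) S"
    unfolding interpolate_def sum.distrib using assms by (simp add: sum.group)
  also have "\<dots> = sum \<alpha> S" by (simp add: lower_share_add_upper_share flip: sum.distrib)
  finally show ?thesis .
qed

lemma interpolate_time_1:
  assumes \<alpha>: "\<alpha> \<in> geom Q"
  shows "interpolate (supp \<alpha>) f g 1 \<alpha> = nerve_map f \<alpha>"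
proof -
  have "lower_share (supp \<alpha>) \<alpha> 1 p = \<alpha> p" "upper_share (supp \<alpha>) \<alpha> 1 p = 0" if "p \<in> supp \<alpha>" for p
    using weight_upto_bounds[OF \<alpha> that] geom_nonneg[OF \<alpha>, of p]
    by (simp_all add: lower_share_def upper_share_def)
  then show ?thesis by (simp add: fun_eq_iff interpolate_def nerve_map_eq_sum_supp)
qed

lemma interpolate_time_0:
  assumes \<alpha>: "\<alpha> \<in> geom Q"
  shows "interpolate (supp \<alpha>) f g 0 \<alpha> = nerve_map g \<alpha>"
proof -
  have "lower_share (supp \<alpha>) \<alpha> 0 p = 0" "upper_share (supp \<alpha>) \<alpha> 0 p = \<alpha> p" if "p \<in> supp \<alpha>" for p
    using weight_upto_bounds[OF \<alpha> that] geom_nonneg[OF \<alpha>, of p]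
    by (simp_all add: lower_share_def upper_share_def)
  then show ?thesis by (simp add: fun_eq_iff interpolate_def nerve_map_eq_sum_supp)
qed

lemma interpolate_eq_nerve_map:
  assumes "\<And>p. p \<in> supp \<alpha> \<Longrightarrow> f p = g p"
  shows "interpolate (supp \<alpha>) f g \<theta> \<alpha> = nerve_map f \<alpha>"
proof
  fix r
  have "{p \<in> supp \<alpha>. g p = r} = {p \<in> supp \<alpha>. f p = r}" using assms by auto
  then show "interpolate (supp \<alpha>) f g \<theta> \<alpha> r = nerve_map f \<alpha> r"
    by (simp add: interpolate_def nerve_map_eq_sum_supp lower_share_add_upper_share flip: sum.distrib)
qed

lemma supp_interpolate_comparable:
  assumes \<alpha>: "\<alpha> \<in> geom Q"
    and fmono: "\<And>p q. p \<in> Q \<Longrightarrow> q \<in> Q \<Longrightarrow> p \<subseteq> q \<Longrightarrow> f p \<subseteq> f q"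
    and gmono: "\<And>p q. p \<in> Q \<Longrightarrow> q \<in> Q \<Longrightarrow> p \<subseteq> q \<Longrightarrow> g p \<subseteq> g q"
    and fg: "\<And>p. p \<in> Q \<Longrightarrow> f p \<subseteq> g p"
    and x: "x \<in> supp (interpolate (supp \<alpha>) f g \<theta> \<alpha>)" and y: "y \<in> supp (interpolate (supp \<alpha>) f g \<theta> \<alpha>)"
  shows "x \<subseteq> y \<or> y \<subseteq> x"
proof -
  let ?S = "supp \<alpha>"
  have chain: "?S \<in> chains Q" using supp_in_chains[OF \<alpha>] .
  have nonneg: "\<And>q. 0 \<le> \<alpha> q" using geom_nonneg[OF \<alpha>] .
  have f_le_g: "f p1 \<subseteq> g p2"
    if "p1 \<in> ?S" "p2 \<in> ?S" "lower_share ?S \<alpha> \<theta> p1 \<noteq> 0" "upper_share ?S \<alpha> \<theta> p2 \<noteq> 0" for p1 p2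
  proof -
    have "p1 \<subseteq> p2"
      using subset_if_lower_upper_share_nonzero[where \<alpha>=\<alpha>, OF chain nonneg that] .
    moreover have "p1 \<in> Q" "p2 \<in> Q" using chainsD(1)[OF chain] that(1,2) by auto
    ultimately show ?thesis using fmono fg by blast
  qed
  obtain p1 where p1: "p1 \<in> ?S"
    "(f p1 = x \<and> lower_share ?S \<alpha> \<theta> p1 \<noteq> 0) \<or> (g p1 = x \<and> upper_share ?S \<alpha> \<theta> p1 \<noteq> 0)"
    using interpolate_nonzero[of ?S f g \<theta> \<alpha> x] x by (auto simp: supp_def[of "interpolate ?S f g \<theta> \<alpha>"])
  obtain p2 where p2: "p2 \<in> ?S"
    "(f p2 = y \<and> lower_share ?S \<alpha> \<theta> p2 \<noteq> 0) \<or> (g p2 = y \<and> upper_share ?S \<alpha> \<theta> p2 \<noteq> 0)"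
    using interpolate_nonzero[of ?S f g \<theta> \<alpha> y] y by (auto simp: supp_def[of "interpolate ?S f g \<theta> \<alpha>"])
  have "p1 \<in> Q" "p2 \<in> Q" "p1 \<subseteq> p2 \<or> p2 \<subseteq> p1"
    using chainsD(1,4)[OF chain] p1(1) p2(1) by auto
  then have "f p1 \<subseteq> f p2 \<or> f p2 \<subseteq> f p1" "g p1 \<subseteq> g p2 \<or> g p2 \<subseteq> g p1"
    using fmono gmono by blast+
  then show ?thesis using p1 p2 f_le_g[of p1 p2] f_le_g[of p2 p1] by blast
qed

lemma interpolate_in_geom:
  assumes \<alpha>: "\<alpha> \<in> geom Q"
    and fQ: "\<And>p. p \<in> Q \<Longrightarrow> f p \<in> Q'" and gQ: "\<And>p. p \<in> Q \<Longrightarrow> g p \<in> Q'"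
    and fmono: "\<And>p q. p \<in> Q \<Longrightarrow> q \<in> Q \<Longrightarrow> p \<subseteq> q \<Longrightarrow> f p \<subseteq> f q"
    and gmono: "\<And>p q. p \<in> Q \<Longrightarrow> q \<in> Q \<Longrightarrow> p \<subseteq> q \<Longrightarrow> g p \<subseteq> g q"
    and fg: "\<And>p. p \<in> Q \<Longrightarrow> f p \<subseteq> g p"
  shows "interpolate (supp \<alpha>) f g \<theta> \<alpha> \<in> geom Q'"
proof -
  let ?S = "supp \<alpha>"
  let ?\<beta> = "interpolate ?S f g \<theta> \<alpha>"
  have fin: "finite (f ` ?S \<union> g ` ?S)" using finite_supp_geom[OF \<alpha>] by simp
  have "sum ?\<beta> (supp ?\<beta>) = sum ?\<beta> (f ` ?S \<union> g ` ?S)"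
    using sum_supp_eq_sum[OF fin supp_interpolate] .
  also have "\<dots> = 1"
    using sum_interpolate[OF finite_supp_geom[OF \<alpha>], of f g \<theta>] \<alpha> by (simp add: geom_def)
  finally have sum1: "sum ?\<beta> (supp ?\<beta>) = 1" .
  have "supp ?\<beta> \<subseteq> Q'"
    using supp_interpolate[of ?S f g \<theta> \<alpha>] supp_subset_geom[OF \<alpha>] fQ gQ by blast
  moreover have "finite (supp ?\<beta>)" using finite_subset[OF supp_interpolate fin] .
  moreover have "supp ?\<beta> \<noteq> {}" using sum1 by auto
  ultimately have "supp ?\<beta> \<in> chains Q'"
    using supp_interpolate_comparable[OF \<alpha> fmono gmono fg] by (simp add: chains_def)
  moreover have "\<forall>r. 0 \<le> ?\<beta> r"
    using interpolate_nonneg[of \<alpha>, OF geom_nonneg[OF \<alpha>]] by blast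
  ultimately show ?thesis using sum1 by (simp add: geom_def)
qed

lemma continuous_map_snd_coordinate:
  "continuous_map (prod_topology X (subtopology (powertop_real UNIV) S)) euclideanreal (\<lambda>x. snd x q)"
proof -
  have "continuous_map (subtopology (powertop_real UNIV) S) euclideanreal (\<lambda>\<alpha>. \<alpha> q)"
    by (rule continuous_map_from_subtopology) (rule continuous_map_product_projection, simp)
  then show ?thesis using continuous_map_compose[OF continuous_map_snd] by (simp add: o_def) blast
qed

lemma continuous_map_fst_time:
  "continuous_map (prod_topology (top_of_set T) Y) euclideanreal fst"
  using continuous_map_compose[OF continuous_map_fst
      continuous_map_from_subtopology[OF continuous_map_id]]
  by (simp add: o_def)

lemma continuous_map_interpolate:
  assumes "finite c"
  shows "continuous_map (prod_topology (top_of_set {0..1}) (subtopology (powertop_real UNIV) (cell c)))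
           (powertop_real UNIV) (\<lambda>x. interpolate c f g (fst x) (snd x))"
  unfolding continuous_map_componentwise_UNIV
proof
  fix r
  let ?Z = "prod_topology (top_of_set {0..1::real}) (subtopology (powertop_real UNIV) (cell c))"
  have weight: "continuous_map ?Z euclideanreal (\<lambda>x. weight_upto c (snd x) p)" for p
    unfolding weight_upto_def using assms
    by (intro continuous_map_sum continuous_map_snd_coordinate) auto
  have "continuous_map ?Z euclideanreal (\<lambda>x. lower_share c (snd x) (fst x) p)"
    "continuous_map ?Z euclideanreal (\<lambda>x. upper_share c (snd x) (fst x) p)" for p
    unfolding lower_share_def upper_share_def
    by (intro continuous_intros weight continuous_map_fst_time continuous_map_snd_coordinate)+
  then show "continuous_map ?Z euclideanreal (\<lambda>x. interpolate c f g (fst x) (snd x) r)"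
    unfolding interpolate_def using assms by (intro continuous_intros continuous_map_sum) auto
qed

lemma continuous_map_nerve_homotopy:
  assumes fQ: "\<And>p. p \<in> Q \<Longrightarrow> f p \<in> Q'" and gQ: "\<And>p. p \<in> Q \<Longrightarrow> g p \<in> Q'"
    and fmono: "\<And>p q. p \<in> Q \<Longrightarrow> q \<in> Q \<Longrightarrow> p \<subseteq> q \<Longrightarrow> f p \<subseteq> f q"
    and gmono: "\<And>p q. p \<in> Q \<Longrightarrow> q \<in> Q \<Longrightarrow> p \<subseteq> q \<Longrightarrow> g p \<subseteq> g q"
    and fg: "\<And>p. p \<in> Q \<Longrightarrow> f p \<subseteq> g p"
  shows "continuous_map (prod_topology (top_of_set {0..1}) (geom_top Q)) (geom_top Q') (nerve_homotopy f g)"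
proof (rule continuous_map_interval_times_geom_top)
  fix c assume c: "c \<in> chains Q"
  have fc: "finite c" using chainsD(2)[OF c] .
  let ?Z = "prod_topology (top_of_set {0..1::real}) (subtopology (powertop_real UNIV) (cell c))"
  show "continuous_map ?Z (geom_top Q') (nerve_homotopy f g)"
  proof (rule continuous_map_into_geom_top[where D="f ` c \<union> g ` c"])
    show "continuous_map ?Z (powertop_real UNIV) (nerve_homotopy f g)"
    proof (rule continuous_map_eq[OF continuous_map_interpolate[OF fc]])
      fix x assume "x \<in> topspace ?Z"
      then show "interpolate c f g (fst x) (snd x) = nerve_homotopy f g x"
        unfolding nerve_homotopy_def using interpolate_eq_supp[OF fc cell_supp_subset] by auto
    qed
    show "finite (f ` c \<union> g ` c)" using fc by simp
    fix x assume "x \<in> topspace ?Z"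
    then have x: "snd x \<in> cell c" by auto
    then have "snd x \<in> geom Q" using cell_subset_geom[OF c] by blast
    then show "nerve_homotopy f g x \<in> geom Q'"
      unfolding nerve_homotopy_def by (rule interpolate_in_geom[OF _ fQ gQ fmono gmono fg])
    show "supp (nerve_homotopy f g x) \<subseteq> f ` c \<union> g ` c"
      unfolding nerve_homotopy_def
      using supp_interpolate[of "supp (snd x)" f g "fst x" "snd x"] cell_supp_subset[OF x] by blast
  qed
qed

lemma homotopic_nerve_maps:
  assumes fQ: "\<And>p. p \<in> Q \<Longrightarrow> f p \<in> Q'" and gQ: "\<And>p. p \<in> Q \<Longrightarrow> g p \<in> Q'"
    and fmono: "\<And>p q. p \<in> Q \<Longrightarrow> q \<in> Q \<Longrightarrow> p \<subseteq> q \<Longrightarrow> f p \<subseteq> f q"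
    and gmono: "\<And>p q. p \<in> Q \<Longrightarrow> q \<in> Q \<Longrightarrow> p \<subseteq> q \<Longrightarrow> g p \<subseteq> g q"
    and fg: "\<And>p. p \<in> Q \<Longrightarrow> f p \<subseteq> g p"
    and in_geom: "\<And>y. y \<in> F \<Longrightarrow> y \<in> geom Q"
    and agree: "\<And>y p. y \<in> F \<Longrightarrow> p \<in> supp y \<Longrightarrow> f p = g p"
  shows "homotopic_with (\<lambda>k. \<forall>y\<in>F. k y = nerve_map f y) (geom_top Q) (geom_top Q')
           (nerve_map g) (nerve_map f)"
proof -
  have "homotopic_with (\<lambda>k. \<forall>y\<in>F. k y = nerve_map f y) (geom_top Q) (geom_top Q')
          (\<lambda>\<alpha>. nerve_homotopy f g (0, \<alpha>)) (\<lambda>\<alpha>. nerve_homotopy f g (1, \<alpha>))"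
    unfolding homotopic_with_def
  proof (intro exI conjI allI ballI)
    show "continuous_map (prod_topology (top_of_set {0..1}) (geom_top Q)) (geom_top Q')
        (nerve_homotopy f g)"
      by (rule continuous_map_nerve_homotopy[OF fQ gQ fmono gmono fg])
    fix t y assume y: "y \<in> F"
    have "interpolate (supp y) f g t y = nerve_map f y"
      by (rule interpolate_eq_nerve_map) (rule agree[OF y])
    then show "nerve_homotopy f g (t, y) = nerve_map f y" by (simp add: nerve_homotopy_def)
  qed auto
  then show ?thesis
    by (rule homotopic_with_eq)
       (use in_geom in \<open>auto simp: nerve_homotopy_def interpolate_time_0 interpolate_time_1\<close>)
qed

lemma continuous_map_nerve_map:
  assumes "\<And>p. p \<in> Q \<Longrightarrow> h p \<in> Q'"
    and "\<And>p q. p \<in> Q \<Longrightarrow> q \<in> Q \<Longrightarrow> p \<subseteq> q \<Longrightarrow> h p \<subseteq> h q"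
  shows "continuous_map (geom_top Q) (geom_top Q') (nerve_map h)"
  using homotopic_with_imp_continuous_maps[OF homotopic_nerve_maps[of Q h Q' h "{}"]] assms by blast

lemma weak_homotopy_equivalenceI:
  assumes "continuous_map X Y f"
    and "\<And>y. y \<in> topspace Y \<Longrightarrow> \<exists>x\<in>topspace X. path_component_of Y (f x) y"
    and "\<And>n x g h. \<lbrakk>x \<in> topspace X; continuous_map (nsphere n) X g; g sphere_base = x;
           continuous_map (nsphere n) X h; h sphere_base = x;
           homotopic_with (\<lambda>k. k sphere_base = f x) (nsphere n) Y (f \<circ> g) (f \<circ> h)\<rbrakk>
           \<Longrightarrow> homotopic_with (\<lambda>k. k sphere_base = x) (nsphere n) X g h"
    and "\<And>n x k. \<lbrakk>x \<in> topspace X; continuous_map (nsphere n) Y k; k sphere_base = f x\<rbrakk>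
           \<Longrightarrow> \<exists>g. continuous_map (nsphere n) X g \<and> g sphere_base = x \<and>
                   homotopic_with (\<lambda>k. k sphere_base = f x) (nsphere n) Y (f \<circ> g) k"
  shows "weak_homotopy_equivalence X Y f"
  using assms unfolding weak_homotopy_equivalence_def by blast

lemma homotopic_with_imp_path_component_of:
  assumes "homotopic_with P X Y f g" and "x \<in> topspace X"
  shows "path_component_of Y (f x) (g x)"
proof -
  obtain h where h: "continuous_map (prod_topology (top_of_set {0..1::real}) X) Y h"
    "\<And>x. h (0, x) = f x" "\<And>x. h (1, x) = g x"
    using assms(1) unfolding homotopic_with_def by auto
  have "pathin Y (\<lambda>t. h (t, x))"
    unfolding pathin_def
    by (rule continuous_map_compose[OF _ h(1), unfolded o_def])
       (simp add: continuous_map_pairwise o_def assms(2))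
  then show ?thesis
    unfolding path_component_of_def using h(2,3) by force
qed

lemma weak_homotopy_equivalence_retraction:
  assumes cont_\<phi>: "continuous_map X Y \<phi>" and cont_\<rho>: "continuous_map Y X \<rho>"
    and retraction: "\<And>x. x \<in> topspace X \<Longrightarrow> \<rho> (\<phi> x) = x"
    and deformation: "homotopic_with (\<lambda>k. \<forall>x\<in>topspace X. k (\<phi> x) = \<phi> x) Y Y id (\<phi> \<circ> \<rho>)"
  shows "weak_homotopy_equivalence X Y \<phi>"
proof (rule weak_homotopy_equivalenceI[OF cont_\<phi>])
  fix y assume y: "y \<in> topspace Y"
  have "path_component_of Y (\<phi> (\<rho> y)) y"
    using homotopic_with_imp_path_component_of[OF deformation y] path_component_of_sym by fastforce
  moreover have "\<rho> y \<in> topspace X" using cont_\<rho> y by (simp add: continuous_map_def Pi_iff)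
  ultimately show "\<exists>x\<in>topspace X. path_component_of Y (\<phi> x) y" by blast
next
  fix n x g h
  assume x: "x \<in> topspace X"
    and g: "continuous_map (nsphere n) X g" "g sphere_base = x"
    and h: "continuous_map (nsphere n) X h" "h sphere_base = x"
    and H: "homotopic_with (\<lambda>k. k sphere_base = \<phi> x) (nsphere n) Y (\<phi> \<circ> g) (\<phi> \<circ> h)"
  have "homotopic_with (\<lambda>k. k sphere_base = x) (nsphere n) X (\<rho> \<circ> (\<phi> \<circ> g)) (\<rho> \<circ> (\<phi> \<circ> h))"
    by (rule homotopic_with_compose_continuous_map_left[OF H cont_\<rho>]) (simp add: retraction x)
  then show "homotopic_with (\<lambda>k. k sphere_base = x) (nsphere n) X g h"
  proof (rule homotopic_with_eq)
    fix z assume "z \<in> topspace (nsphere n)"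
    then have "g z \<in> topspace X" "h z \<in> topspace X"
      using g(1) h(1) by (auto simp: continuous_map_def)
    then show "g z = (\<rho> \<circ> (\<phi> \<circ> g)) z" "h z = (\<rho> \<circ> (\<phi> \<circ> h)) z"
      by (simp_all add: retraction)
  next
    fix h k :: "(nat \<Rightarrow> real) \<Rightarrow> 'a"
    assume "\<And>z. z \<in> topspace (nsphere n) \<Longrightarrow> h z = k z"
    then show "(h sphere_base = x) = (k sphere_base = x)"
      unfolding sphere_base_def by (simp add: in_topspace_nsphere)
  qed
next
  fix n x k
  assume x: "x \<in> topspace X" and k: "continuous_map (nsphere n) Y k" "k sphere_base = \<phi> x"
  have "homotopic_with (\<lambda>j. j sphere_base = \<phi> x) (nsphere n) Y (id \<circ> k) ((\<phi> \<circ> \<rho>) \<circ> k)"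
    by (rule homotopic_with_compose_continuous_map_right[OF deformation k(1)]) (simp add: k(2) x)
  then have "homotopic_with (\<lambda>j. j sphere_base = \<phi> x) (nsphere n) Y (\<phi> \<circ> (\<rho> \<circ> k)) k"
    using homotopic_with_symD by (simp add: o_assoc)
  moreover have "continuous_map (nsphere n) X (\<rho> \<circ> k)"
    using continuous_map_compose[OF k(1) cont_\<rho>] .
  moreover have "(\<rho> \<circ> k) sphere_base = x" using k(2) retraction[OF x] by simp
  ultimately show "\<exists>g. continuous_map (nsphere n) X g \<and> g sphere_base = x \<and>
      homotopic_with (\<lambda>k. k sphere_base = \<phi> x) (nsphere n) Y (\<phi> \<circ> g) k" by blast
qed

text \<open>The definition compares based homotopy classes, so contractibility is needed in its based
  form, at every point.\<close>

lemma weak_homotopy_equivalence_between_contractible: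
  assumes cont: "continuous_map X Y f"
    and contr_X: "\<And>x. x \<in> topspace X \<Longrightarrow> homotopic_with (\<lambda>k. k x = x) X X id (\<lambda>_. x)"
    and contr_Y: "\<And>x. x \<in> topspace X \<Longrightarrow> homotopic_with (\<lambda>k. k (f x) = f x) Y Y id (\<lambda>_. f x)"
    and x0: "x0 \<in> topspace X"
  shows "weak_homotopy_equivalence X Y f"
proof (rule weak_homotopy_equivalenceI[OF cont])
  fix y assume "y \<in> topspace Y"
  then have "path_component_of Y (f x0) y"
    using homotopic_with_imp_path_component_of[OF contr_Y[OF x0]] path_component_of_sym by fastforce
  then show "\<exists>x\<in>topspace X. path_component_of Y (f x) y" using x0 by blast
next
  fix n x g h
  assume x: "x \<in> topspace X"
    and g: "continuous_map (nsphere n) X g" "g sphere_base = x"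
    and h: "continuous_map (nsphere n) X h" "h sphere_base = x"
  have "homotopic_with (\<lambda>j. j sphere_base = x) (nsphere n) X (id \<circ> g) ((\<lambda>_. x) \<circ> g)"
    by (rule homotopic_with_compose_continuous_map_right[OF contr_X[OF x] g(1)]) (simp add: g(2))
  moreover have "homotopic_with (\<lambda>j. j sphere_base = x) (nsphere n) X (id \<circ> h) ((\<lambda>_. x) \<circ> h)"
    by (rule homotopic_with_compose_continuous_map_right[OF contr_X[OF x] h(1)]) (simp add: h(2))
  ultimately
  show "homotopic_with (\<lambda>k. k sphere_base = x) (nsphere n) X g h"
    by (simp add: o_def) (meson homotopic_with_symD homotopic_with_trans)
next
  fix n x k
  assume x: "x \<in> topspace X" and k: "continuous_map (nsphere n) Y k" "k sphere_base = f x"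
  have "homotopic_with (\<lambda>j. j sphere_base = f x) (nsphere n) Y (id \<circ> k) ((\<lambda>_. f x) \<circ> k)"
    by (rule homotopic_with_compose_continuous_map_right[OF contr_Y[OF x] k(1)]) (simp add: k(2))
  then have "homotopic_with (\<lambda>j. j sphere_base = f x) (nsphere n) Y (f \<circ> (\<lambda>_. x)) k"
    using homotopic_with_symD by (simp add: o_def)
  moreover have "continuous_map (nsphere n) X (\<lambda>_. x)" using x by simp
  ultimately show "\<exists>g. continuous_map (nsphere n) X g \<and> g sphere_base = x \<and>
      homotopic_with (\<lambda>k. k sphere_base = f x) (nsphere n) Y (f \<circ> g) k" by blast
qed

section \<open>Homotopy types of realizations of posets\<close>

lemma homotopic_nerve_map_into_chain_const:
  fixes r :: "'p set \<Rightarrow> 'p set"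
  assumes x: "x \<in> cell c" and c: "c \<in> chains Q"
    and maps_to: "\<And>p. p \<in> Q \<Longrightarrow> r p \<in> c"
    and mono: "\<And>p q. p \<in> Q \<Longrightarrow> q \<in> Q \<Longrightarrow> p \<subseteq> q \<Longrightarrow> r p \<subseteq> r q"
    and fixes_x: "nerve_map r x = x"
  shows "homotopic_with (\<lambda>k. k x = x) (geom_top Q) (geom_top Q) (nerve_map r) (\<lambda>_. x)"
proof -
  define H where
    "H = (\<lambda>z::real \<times> ('p set \<Rightarrow> real). \<lambda>q. (1 - fst z) * nerve_map r (snd z) q + fst z * x q)"
  have "finite c" using chainsD(2)[OF c] .
  have "continuous_map (prod_topology (top_of_set {0..1}) (geom_top Q)) (geom_top Q) H"
  proof (rule continuous_map_interval_times_geom_top)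
    fix d assume d: "d \<in> chains Q"
    let ?Z = "prod_topology (top_of_set {0..1::real}) (subtopology (powertop_real UNIV) (cell d))"
    show "continuous_map ?Z (geom_top Q) H"
    proof (rule continuous_map_into_geom_top[OF _ _ \<open>finite c\<close>])
      have "continuous_map ?Z (powertop_real UNIV)
              (\<lambda>z. \<lambda>q. (1 - fst z) * sum (snd z) {p \<in> d. r p = q} + fst z * x q)"
        unfolding continuous_map_componentwise_UNIV using chainsD(2)[OF d]
        by (intro allI continuous_intros continuous_map_snd_coordinate continuous_map_fst_time) auto
      then show "continuous_map ?Z (powertop_real UNIV) H"
        by (rule continuous_map_eq)
           (auto simp: H_def nerve_map_cell_eq[OF _ chainsD(2)[OF d]])
      fix z assume "z \<in> topspace ?Z"
      then have z: "snd z \<in> geom Q" "fst z \<in> {0..1}" using cell_subset_geom[OF d] by auto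
      have "nerve_map r (snd z) \<in> geom Q"
        using nerve_map_in_geom[where h=r, OF z(1)] maps_to mono chainsD(1)[OF c] by blast
      moreover have "supp (nerve_map r (snd z)) \<subseteq> c"
        using supp_nerve_map[OF z(1), of r] maps_to chainsD(1)[OF supp_in_chains[OF z(1)]] by auto
      ultimately have "nerve_map r (snd z) \<in> cell c" using geom_in_cellI \<open>finite c\<close> by blast
      then have "H z \<in> cell c" unfolding H_def using cell_convex[OF _ x] z(2) by auto
      then show "H z \<in> geom Q" "supp (H z) \<subseteq> c" using cell_subset_geom[OF c] cell_supp_subset by blast+
    qed
  qed
  then show ?thesis
    unfolding homotopic_with_def
    by (intro exI[of _ H] conjI allI ballI) (auto simp: H_def fixes_x algebra_simps)
qed

definition chain_floor :: "'p set set \<Rightarrow> 'p set \<Rightarrow> 'p set" where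
  "chain_floor c \<mu> = \<Union>{p \<in> c. p \<subseteq> \<mu>}"

lemma chain_floor_in_chain:
  assumes "c \<in> chains Q" "p \<in> c" "p \<subseteq> \<mu>"
  shows "chain_floor c \<mu> \<in> c"
proof -
  have "\<Union>{p \<in> c. p \<subseteq> \<mu>} \<in> {p \<in> c. p \<subseteq> \<mu>}"
  proof (rule Union_in_chain)
    show "finite {p \<in> c. p \<subseteq> \<mu>}" using chainsD(2)[OF assms(1)] by simp
    show "{p \<in> c. p \<subseteq> \<mu>} \<noteq> {}" using assms(2,3) by blast
    show "subset.chain UNIV {p \<in> c. p \<subseteq> \<mu>}"
      using chainsD(4)[OF assms(1)] unfolding subset_chain_def by blast
  qed
  then show ?thesis by (simp add: chain_floor_def)
qed

lemma chain_floor_subset: "chain_floor c \<mu> \<subseteq> \<mu>"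
  unfolding chain_floor_def by blast

lemma chain_floor_mono: "\<mu> \<subseteq> \<nu> \<Longrightarrow> chain_floor c \<mu> \<subseteq> chain_floor c \<nu>"
  unfolding chain_floor_def by blast

lemma chain_floor_eq_self: "p \<in> c \<Longrightarrow> chain_floor c p = p"
  unfolding chain_floor_def by blast

lemma insert_in_chains:
  assumes "c \<in> chains Q" "\<sigma> \<in> Q" "\<And>p. p \<in> c \<Longrightarrow> \<sigma> \<subseteq> p"
  shows "insert \<sigma> c \<in> chains Q"
  using chainsD[OF assms(1)] assms(2,3) unfolding chains_def by blast

text \<open>Adjoin \<open>\<sigma>\<close> to the support chain of \<open>x\<close> and let \<open>r \<mu>\<close> be the largest element of this chain
  below \<open>\<mu> \<union> \<sigma>\<close>. Then \<open>\<mu> \<subseteq> \<mu> \<union> \<sigma> \<supseteq> r \<mu>\<close> gives homotopies \<open>id \<simeq> (\<union> \<sigma>) \<simeq> r\<close>, and \<open>r\<close> lands in a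
  single cell, which is contracted linearly onto \<open>x\<close>; all three homotopies fix \<open>x\<close>.\<close>

lemma cone_based_contraction:
  assumes x: "x \<in> geom Q" and \<sigma>: "\<sigma> \<in> Q" and above: "\<And>p. p \<in> supp x \<Longrightarrow> \<sigma> \<subseteq> p"
    and join: "\<And>\<mu>. \<mu> \<in> Q \<Longrightarrow> \<mu> \<union> \<sigma> \<in> Q"
  shows "homotopic_with (\<lambda>k. k x = x) (geom_top Q) (geom_top Q) id (\<lambda>_. x)"
proof -
  define c where "c = insert \<sigma> (supp x)"
  define r where "r = (\<lambda>\<mu>. chain_floor c (\<mu> \<union> \<sigma>))"
  have c: "c \<in> chains Q"
    unfolding c_def using insert_in_chains[OF supp_in_chains[OF x] \<sigma> above] .
  have supp_x: "supp x \<subseteq> c" by (auto simp: c_def)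
  have r_in: "r \<mu> \<in> c" for \<mu>
    unfolding r_def by (rule chain_floor_in_chain[OF c, of \<sigma>]) (auto simp: c_def)
  have join_fixes: "p \<union> \<sigma> = p" if "p \<in> supp x" for p using above[OF that] by blast
  have r_fixes: "r p = p" if "p \<in> supp x" for p
    using join_fixes[OF that] chain_floor_eq_self[of p c] supp_x that unfolding r_def by auto
  have "nerve_map r x = x" using r_fixes by (intro nerve_map_eq_self) blast
  have "homotopic_with (\<lambda>k. \<forall>y\<in>{x}. k y = nerve_map (\<lambda>p. p) y) (geom_top Q) (geom_top Q)
      (nerve_map (\<lambda>\<mu>. \<mu> \<union> \<sigma>)) (nerve_map (\<lambda>p. p))"
    using join join_fixes x by (intro homotopic_nerve_maps) auto
  then have "homotopic_with (\<lambda>k. k x = x) (geom_top Q) (geom_top Q) id (nerve_map (\<lambda>\<mu>. \<mu> \<union> \<sigma>))"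
    by (simp add: homotopic_with_sym)
  moreover have "homotopic_with (\<lambda>k. \<forall>y\<in>{x}. k y = nerve_map r y) (geom_top Q) (geom_top Q)
      (nerve_map (\<lambda>\<mu>. \<mu> \<union> \<sigma>)) (nerve_map r)"
  proof (rule homotopic_nerve_maps)
    show "r p \<in> Q" for p using r_in chainsD(1)[OF c] by blast
    show "r p \<subseteq> r q" if "p \<subseteq> q" for p q
      unfolding r_def using that by (intro chain_floor_mono) blast
    show "r p \<subseteq> p \<union> \<sigma>" for p unfolding r_def by (rule chain_floor_subset)
    show "r p = p \<union> \<sigma>" if "y \<in> {x}" "p \<in> supp y" for y p
      using that r_fixes join_fixes by simp
  qed (use join x in auto)
  then have "homotopic_with (\<lambda>k. k x = x) (geom_top Q) (geom_top Q)
      (nerve_map (\<lambda>\<mu>. \<mu> \<union> \<sigma>)) (nerve_map r)"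
    using \<open>nerve_map r x = x\<close> by simp
  moreover have "homotopic_with (\<lambda>k. k x = x) (geom_top Q) (geom_top Q) (nerve_map r) (\<lambda>_. x)"
  proof (rule homotopic_nerve_map_into_chain_const[OF _ c r_in])
    show "x \<in> cell c" using geom_in_cellI[OF x supp_x chainsD(2)[OF c]] .
    show "r p \<subseteq> r q" if "p \<subseteq> q" for p q
      unfolding r_def using that by (intro chain_floor_mono) blast
  qed (rule \<open>nerve_map r x = x\<close>)
  ultimately show ?thesis by (meson homotopic_with_trans)
qed

lemma weak_homotopy_equivalence_nerve_map_coreflection:
  assumes \<psi>_to: "\<And>p. p \<in> Q \<Longrightarrow> \<psi> p \<in> Q'" and \<rho>_to: "\<And>q. q \<in> Q' \<Longrightarrow> \<rho> q \<in> Q"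
    and \<psi>_mono: "\<And>p q. p \<in> Q \<Longrightarrow> q \<in> Q \<Longrightarrow> p \<subseteq> q \<Longrightarrow> \<psi> p \<subseteq> \<psi> q"
    and \<rho>_mono: "\<And>p q. p \<in> Q' \<Longrightarrow> q \<in> Q' \<Longrightarrow> p \<subseteq> q \<Longrightarrow> \<rho> p \<subseteq> \<rho> q"
    and \<rho>_\<psi>: "\<And>p. p \<in> Q \<Longrightarrow> \<rho> (\<psi> p) = p" and \<psi>_\<rho>: "\<And>q. q \<in> Q' \<Longrightarrow> \<psi> (\<rho> q) \<subseteq> q"
  shows "weak_homotopy_equivalence (geom_top Q) (geom_top Q') (nerve_map \<psi>)"
proof (rule weak_homotopy_equivalence_retraction)
  show "continuous_map (geom_top Q) (geom_top Q') (nerve_map \<psi>)"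
    using \<psi>_to \<psi>_mono by (rule continuous_map_nerve_map)
  show "continuous_map (geom_top Q') (geom_top Q) (nerve_map \<rho>)"
    using \<rho>_to \<rho>_mono by (rule continuous_map_nerve_map)
  have \<psi>_geom: "nerve_map \<psi> x \<in> geom Q'" if "x \<in> geom Q" for x
    using nerve_map_in_geom[where h=\<psi>, OF that] \<psi>_to \<psi>_mono by blast
  have fixed: "nerve_map (\<psi> \<circ> \<rho>) (nerve_map \<psi> x) = nerve_map \<psi> x" if x: "x \<in> geom Q" for x
  proof (rule nerve_map_eq_self)
    fix p assume "p \<in> supp (nerve_map \<psi> x)"
    then obtain q where "q \<in> supp x" "p = \<psi> q" unfolding supp_nerve_map[OF x] by blast
    then have "q \<in> Q" "p = \<psi> q" using supp_subset_geom[OF x] by auto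
    then show "(\<psi> \<circ> \<rho>) p = p" by (simp add: \<rho>_\<psi>)
  qed
  show "nerve_map \<rho> (nerve_map \<psi> x) = x" if "x \<in> topspace (geom_top Q)" for x
  proof -
    have x: "x \<in> geom Q" using that by simp
    have "nerve_map (\<rho> \<circ> \<psi>) x = x"
      by (rule nerve_map_eq_self) (use supp_subset_geom[OF x] \<rho>_\<psi> in auto)
    then show ?thesis using nerve_map_compose[OF x, where f=\<psi> and g=\<rho>] by simp
  qed
  have "homotopic_with (\<lambda>k. \<forall>y\<in>nerve_map \<psi> ` geom Q. k y = nerve_map (\<psi> \<circ> \<rho>) y)
      (geom_top Q') (geom_top Q') (nerve_map (\<lambda>q. q)) (nerve_map (\<psi> \<circ> \<rho>))"
  proof (rule homotopic_nerve_maps)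
    show "(\<psi> \<circ> \<rho>) q \<in> Q'" if "q \<in> Q'" for q using that \<rho>_to \<psi>_to by simp
    show "(\<psi> \<circ> \<rho>) p \<subseteq> (\<psi> \<circ> \<rho>) q" if "p \<in> Q'" "q \<in> Q'" "p \<subseteq> q" for p q
      using that \<rho>_to \<rho>_mono \<psi>_mono by simp
    show "(\<psi> \<circ> \<rho>) q \<subseteq> q" if "q \<in> Q'" for q using that \<psi>_\<rho> by simp
    show "y \<in> geom Q'" if "y \<in> nerve_map \<psi> ` geom Q" for y using that \<psi>_geom by blast
    show "(\<psi> \<circ> \<rho>) q = q" if y: "y \<in> nerve_map \<psi> ` geom Q" and q: "q \<in> supp y" for y q
    proof -
      obtain x where x: "x \<in> geom Q" "y = nerve_map \<psi> x" using y by blast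
      obtain p where "p \<in> supp x" "q = \<psi> p" using q unfolding x(2) supp_nerve_map[OF x(1)] by blast
      then have "p \<in> Q" "q = \<psi> p" using supp_subset_geom[OF x(1)] by auto
      then show ?thesis by (simp add: \<rho>_\<psi>)
    qed
  qed
  then have "homotopic_with (\<lambda>k. \<forall>x\<in>topspace (geom_top Q). k (nerve_map \<psi> x) = nerve_map \<psi> x)
      (geom_top Q') (geom_top Q') id (nerve_map (\<psi> \<circ> \<rho>))"
    unfolding nerve_map_ident by (rule homotopic_with_mono) (simp add: fixed)
  then show "homotopic_with (\<lambda>k. \<forall>x\<in>topspace (geom_top Q). k (nerve_map \<psi> x) = nerve_map \<psi> x)
      (geom_top Q') (geom_top Q') id (nerve_map \<psi> \<circ> nerve_map \<rho>)"
  proof (rule homotopic_with_eq)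
    show "(nerve_map \<psi> \<circ> nerve_map \<rho>) y = nerve_map (\<psi> \<circ> \<rho>) y" if "y \<in> topspace (geom_top Q')" for y
      using that nerve_map_compose[of y Q'] by simp
    fix h k :: "('b set \<Rightarrow> real) \<Rightarrow> 'b set \<Rightarrow> real"
    assume "\<And>y. y \<in> topspace (geom_top Q') \<Longrightarrow> h y = k y"
    then show "(\<forall>x\<in>topspace (geom_top Q). h (nerve_map \<psi> x) = nerve_map \<psi> x) \<longleftrightarrow>
        (\<forall>x\<in>topspace (geom_top Q). k (nerve_map \<psi> x) = nerve_map \<psi> x)"
      using \<psi>_geom by simp
  qed simp
qed

lemma up_poset_based_contraction:
  assumes "\<sigma> \<in> P" and x: "x \<in> geom (up_poset P \<sigma>)"
  shows "homotopic_with (\<lambda>k. k x = x) (geom_top (up_poset P \<sigma>)) (geom_top (up_poset P \<sigma>)) id (\<lambda>_. x)"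
proof (rule cone_based_contraction[OF x])
  show "\<sigma> \<in> up_poset P \<sigma>" using assms(1) by (simp add: up_poset_def)
  show "\<sigma> \<subseteq> p" if "p \<in> supp x" for p
    using supp_subset_geom[OF x] that by (auto simp: up_poset_def)
  show "\<mu> \<union> \<sigma> \<in> up_poset P \<sigma>" if "\<mu> \<in> up_poset P \<sigma>" for \<mu>
    using that by (auto simp: up_poset_def Un_absorb2)
qed

lemma contractible_up_poset:
  assumes "\<sigma> \<in> P"
  shows "contractible_space (geom_top (up_poset P \<sigma>))"
proof -
  have "\<sigma> \<in> up_poset P \<sigma>" using assms by (simp add: up_poset_def)
  then have "homotopic_with (\<lambda>k. True) (geom_top (up_poset P \<sigma>)) (geom_top (up_poset P \<sigma>))
      id (\<lambda>_. \<lambda>q. if q = \<sigma> then 1 else 0)"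
    by (rule homotopic_with_mono[OF up_poset_based_contraction[OF assms vertex_in_geom]]) simp
  then show ?thesis unfolding contractible_space_def by blast
qed

lemma weak_homotopy_equivalence_up_poset_star:
  assumes "P \<subseteq> K" and "\<sigma> \<in> P"
  shows "weak_homotopy_equivalence (geom_top (up_poset P \<sigma>)) (geom_top (star K \<sigma>)) (nerve_map (\<lambda>\<tau>. \<tau>))"
proof (rule weak_homotopy_equivalence_between_contractible)
  have up_star: "\<tau> \<in> star K \<sigma>" if "\<tau> \<in> up_poset P \<sigma>" for \<tau>
    using that assms(1) by (auto simp: up_poset_def star_def Un_absorb1)
  then show "continuous_map (geom_top (up_poset P \<sigma>)) (geom_top (star K \<sigma>)) (nerve_map (\<lambda>\<tau>. \<tau>))"
    by (intro continuous_map_nerve_map) auto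
  show "\<And>x. x \<in> topspace (geom_top (up_poset P \<sigma>)) \<Longrightarrow>
      homotopic_with (\<lambda>k. k x = x) (geom_top (up_poset P \<sigma>)) (geom_top (up_poset P \<sigma>)) id (\<lambda>_. x)"
    using up_poset_based_contraction[OF assms(2)] by simp
  have "\<sigma> \<in> up_poset P \<sigma>" using assms(2) by (simp add: up_poset_def)
  then show "(\<lambda>q. if q = \<sigma> then 1 else 0) \<in> topspace (geom_top (up_poset P \<sigma>))"
    using vertex_in_geom by simp
  fix x assume "x \<in> topspace (geom_top (up_poset P \<sigma>))"
  then have x: "x \<in> geom (up_poset P \<sigma>)" by simp
  have "x \<in> geom (star K \<sigma>)"
    using nerve_map_in_geom[where h="\<lambda>\<tau>. \<tau>", OF x] up_star by simp
  then have "homotopic_with (\<lambda>k. k x = x) (geom_top (star K \<sigma>)) (geom_top (star K \<sigma>)) id (\<lambda>_. x)"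
  proof (rule cone_based_contraction)
    show "\<sigma> \<in> star K \<sigma>" using assms by (auto simp: star_def)
    show "\<sigma> \<subseteq> p" if "p \<in> supp x" for p
      using supp_subset_geom[OF x] that by (auto simp: up_poset_def)
    show "\<mu> \<union> \<sigma> \<in> star K \<sigma>" if "\<mu> \<in> star K \<sigma>" for \<mu>
    proof -
      have "\<sigma> \<union> (\<mu> \<union> \<sigma>) = \<sigma> \<union> \<mu>" "\<mu> \<union> \<sigma> = \<sigma> \<union> \<mu>" by auto
      then show ?thesis using that by (simp add: star_def)
    qed
  qed
  then show "homotopic_with (\<lambda>k. k (nerve_map (\<lambda>\<tau>. \<tau>) x) = nerve_map (\<lambda>\<tau>. \<tau>) x)
      (geom_top (star K \<sigma>)) (geom_top (star K \<sigma>)) id (\<lambda>_. nerve_map (\<lambda>\<tau>. \<tau>) x)"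
    by simp
qed

lemma weak_homotopy_equivalence_star_in_up_poset:
  assumes K: "simplicial_complex K" and disjoint: "\<sigma> \<inter> A = {}"
  shows "weak_homotopy_equivalence (geom_top (star_in K \<sigma> A))
           (geom_top (up_poset {\<tau> \<in> K. \<tau> \<inter> A \<noteq> {}} \<sigma>)) (nerve_map (\<lambda>\<mu>. \<mu> \<union> \<sigma>))"
proof (rule weak_homotopy_equivalence_nerve_map_coreflection[where \<rho>="\<lambda>\<tau>. \<tau> \<inter> A"])
  fix \<mu> assume "\<mu> \<in> star_in K \<sigma> A"
  then have \<mu>: "\<mu> \<subseteq> A" "\<mu> \<noteq> {}" "\<mu> \<union> \<sigma> \<in> K" by (auto simp: star_in_def)
  then show "\<mu> \<union> \<sigma> \<in> up_poset {\<tau> \<in> K. \<tau> \<inter> A \<noteq> {}} \<sigma>" by (auto simp: up_poset_def)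
  show "(\<mu> \<union> \<sigma>) \<inter> A = \<mu>" using \<mu>(1) disjoint by blast
next
  fix \<tau> assume "\<tau> \<in> up_poset {\<tau> \<in> K. \<tau> \<inter> A \<noteq> {}} \<sigma>"
  then have \<tau>: "\<tau> \<in> K" "\<sigma> \<subseteq> \<tau>" "\<tau> \<inter> A \<noteq> {}" by (auto simp: up_poset_def)
  have "\<tau> \<inter> A \<union> \<sigma> \<subseteq> \<tau>" "\<tau> \<inter> A \<union> \<sigma> \<noteq> {}" using \<tau> by auto
  then have "\<tau> \<inter> A \<union> \<sigma> \<in> K" using K \<tau>(1) unfolding simplicial_complex_def by blast
  moreover have "finite (\<tau> \<inter> A)" using K \<tau>(1) unfolding simplicial_complex_def by blast
  ultimately show "\<tau> \<inter> A \<in> star_in K \<sigma> A" using \<tau>(3) by (simp add: star_in_def)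
  show "\<tau> \<inter> A \<union> \<sigma> \<subseteq> \<tau>" using \<tau>(2) by blast
qed auto

theorem proposition7p4:
  fixes K :: "'v set set" and X Y :: "'v set"
  assumes "simplicial_complex K"
    and "X \<union> Y = vertex_set K"
  defines "A \<equiv> X \<inter> Y"
  defines "P \<equiv> {\<sigma> \<in> K. \<sigma> \<subseteq> X \<or> \<sigma> \<subseteq> Y \<or> \<sigma> \<inter> A \<noteq> {}}"
  shows "(\<forall>\<sigma>\<in>P. contractible_space (geom_top (up_poset P \<sigma>)) \<and>
            weak_homotopy_equivalence (geom_top (up_poset P \<sigma>)) (geom_top (star K \<sigma>))
              (nerve_map (\<lambda>\<tau>. \<tau>)))
       \<and> (\<forall>\<sigma>\<in>K - P.
            weak_homotopy_equivalence (geom_top (star_in K \<sigma> A)) (geom_top (up_poset P \<sigma>))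
              (nerve_map (\<lambda>\<mu>. \<mu> \<union> \<sigma>)))"
proof (intro conjI ballI)
  fix \<sigma> assume "\<sigma> \<in> P"
  then show "contractible_space (geom_top (up_poset P \<sigma>))" by (rule contractible_up_poset)
  have "P \<subseteq> K" by (auto simp: P_def)
  then show "weak_homotopy_equivalence (geom_top (up_poset P \<sigma>)) (geom_top (star K \<sigma>))
      (nerve_map (\<lambda>\<tau>. \<tau>))"
    using \<open>\<sigma> \<in> P\<close> by (rule weak_homotopy_equivalence_up_poset_star)
next
  fix \<sigma> assume \<sigma>: "\<sigma> \<in> K - P"
  then have "\<sigma> \<inter> A = {}" by (simp add: P_def)
  moreover have "up_poset P \<sigma> = up_poset {\<tau> \<in> K. \<tau> \<inter> A \<noteq> {}} \<sigma>"
    using \<sigma> by (auto simp: P_def up_poset_def)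
  ultimately show "weak_homotopy_equivalence (geom_top (star_in K \<sigma> A)) (geom_top (up_poset P \<sigma>))
      (nerve_map (\<lambda>\<mu>. \<mu> \<union> \<sigma>))"
    by (simp add: weak_homotopy_equivalence_star_in_up_poset[OF assms(1)])
qed

end
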